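(* Let $U$ be a $d\times d$ unitary matrix, $U_{ij}=\langle a_i|b_j\rangle$ for two orthonormal bases $\{|a_i\rangle\}$, $\{|b_j\rangle\}$ of $\mathbb{C}^d$, and let $p_i=\langle a_i|\rho|a_i\rangle$, $q_j=\langle b_j|\rho|b_j\rangle$ for a state $\rho$ on $\mathbb{C}^d$. For $k=1,\dots,d$ let $s_k=\max\{\|M\|: M \text{ a submatrix of } U \text{ with } \#\mathrm{cols}(M)+\#\mathrm{rows}(M)=k+1\}$, where $\|M\|$ is the largest singular value, and let $W=(W_1,\dots,W_d)=(s_1,s_2-s_1,\dots,s_d-s_{d-1})$. Then for every $\alpha>1$, $$H_\alpha(p)+H_\alpha(q)\ge\frac{2}{1-\alpha}\ln\left(\frac{1+\sum_i W_i^\alpha}{2}\right).$$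
   Context: The Rényi entropy of order $\alpha\neq1$ of a probability vector $x$ is $H_\alpha(x)=\frac{1}{1-\alpha}\ln\sum_i x_i^\alpha$. A submatrix is obtained by selecting a nonempty set of rows and a nonempty set of columns. *)

theory Defs
  imports "HOL-Analysis.Analysis"
begin

definition cinner :: "complex ^ 'n::finite \<Rightarrow> complex ^ 'n \<Rightarrow> complex" where
  "cinner x y = (\<Sum>i\<in>UNIV. cnj (x $ i) * y $ i)"

definition orthonormal_basis_c :: "('n::finite \<Rightarrow> complex ^ 'n) \<Rightarrow> bool" where
  "orthonormal_basis_c a \<longleftrightarrow> (\<forall>i j. cinner (a i) (a j) = (if i = j then 1 else 0))"

definition density_matrix :: "complex ^ 'n ^ 'n::finite \<Rightarrow> bool" where
  "density_matrix \<rho> \<longleftrightarrow>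
     (\<forall>i j. \<rho> $ i $ j = cnj (\<rho> $ j $ i)) \<and>
     (\<forall>x. cinner x (\<rho> *v x) \<in> \<real> \<and> 0 \<le> Re (cinner x (\<rho> *v x))) \<and>
     (\<Sum>i\<in>UNIV. \<rho> $ i $ i) = 1"

text \<open>Operator (spectral) norm = largest singular value of the submatrix of U with
  row set I and column set J.\<close>
definition submatrix_norm :: "complex ^ 'n ^ 'n::finite \<Rightarrow> 'n set \<Rightarrow> 'n set \<Rightarrow> real" where
  "submatrix_norm U I J =
     Sup {sqrt (\<Sum>i\<in>I. (cmod (\<Sum>j\<in>J. U $ i $ j * x $ j))\<^sup>2) | x.
            (\<Sum>j\<in>J. (cmod (x $ j))\<^sup>2) = 1}"

definition s_seq :: "complex ^ 'n ^ 'n::finite \<Rightarrow> nat \<Rightarrow> real" where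
  "s_seq U k = Max {submatrix_norm U I J | I J.
       I \<noteq> {} \<and> J \<noteq> {} \<and> card I + card J = k + 1}"

definition W_seq :: "complex ^ 'n ^ 'n::finite \<Rightarrow> nat \<Rightarrow> real" where
  "W_seq U k = (if k = 1 then s_seq U 1 else s_seq U k - s_seq U (k - 1))"

definition renyi_entropy :: "real \<Rightarrow> ('n::finite \<Rightarrow> real) \<Rightarrow> real" where
  "renyi_entropy \<alpha> p = 1 / (1 - \<alpha>) * ln (\<Sum>i\<in>UNIV. p i powr \<alpha>)"

end

theory Submission
  imports Defs
begin

text \<open>
  For a pure state \<open>w\<close> and index sets \<open>I\<close>, \<open>J\<close>, the cross term between the projections of
  \<open>w\<close> onto \<open>span {a i | i \<in> I}\<close> and \<open>span {b j | j \<in> J}\<close> is controlled by the submatrix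
  norm \<open>\<parallel>U\<^sub>I\<^sub>J\<parallel>\<close>, which gives \<open>\<Sum>\<^sub>I p + \<Sum>\<^sub>J q \<le> 1 + \<parallel>U\<^sub>I\<^sub>J\<parallel>\<close>. This bound is linear in
  the state, and a positive semidefinite matrix is a sum of rank-one terms (obtained by
  repeated pivoting, so no spectral theorem is needed); hence it holds for mixed states too.
  Consequently the \<open>2d\<close> numbers \<open>(p, q)\<close> are weakly majorized by \<open>(1, W\<^sub>1, \<dots>, W\<^sub>d)\<close>, whose
  partial sums are \<open>1 + s\<^sub>k\<close>. As \<open>t \<mapsto> t\<^sup>\<alpha>\<close> is convex and increasing on \<open>[0, \<infinity>)\<close>, this gives
  \<open>\<Sum> p\<^sup>\<alpha> + \<Sum> q\<^sup>\<alpha> \<le> 1 + \<Sum> W\<^sup>\<alpha>\<close>, and \<open>ln P + ln Q \<le> 2 ln ((P + Q) / 2)\<close> turns this into the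
  entropic bound.
\<close>

section \<open>Weak majorization and sums of powers\<close>

lemma powr_ge_tangent:
  fixes x y a :: real
  assumes "0 \<le> x" "0 \<le> y" "1 < a"
  shows "x powr a + a * x powr (a - 1) * (y - x) \<le> y powr a"
proof (cases "x = 0 \<or> y = 0")
  case True
  have "x powr (a - 1) * x = x powr a"
    using powr_mult_base[of x "a - 1"] assms by (cases "x = 0") (auto simp: mult.commute)
  then have "x powr a + a * x powr (a - 1) * (0 - x) = (1 - a) * x powr a"
    by (simp add: algebra_simps)
  also have "\<dots> \<le> 0"
    using assms by (simp add: mult_nonpos_nonneg)
  finally show ?thesis
    using True assms by auto
next
  case False
  then have xy: "0 < x" "0 < y" using assms by auto
  have "a * x powr (a - 1) * (y - x) \<le> y powr a - x powr a"
  proof (rule convex_on_imp_above_tangent[where A="{0<..}"])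
    show "convex_on {0<..} (\<lambda>x. x powr a)" using assms powr_convex[of a] by simp
    show "x \<in> interior {0<..}" using xy by (simp add: interior_open)
    show "((\<lambda>x. x powr a) has_field_derivative a * x powr (a - 1)) (at x within {0<..})"
      by (rule has_field_derivative_at_within[OF has_real_derivative_powr[OF xy(1)]])
  qed (use xy in auto)
  then show ?thesis by simp
qed

lemma sum_mult_nonneg_if_partial_sums_nonneg:
  fixes g d :: "nat \<Rightarrow> real"
  assumes dec: "\<And>k. g (Suc k) \<le> g k" and nonneg: "\<And>k. 0 \<le> g k"
    and partial: "\<And>k. k \<le> N \<Longrightarrow> 0 \<le> (\<Sum>m<k. d m)"
  shows "0 \<le> (\<Sum>k<N. g k * d k)"
proof -
  have "g n * (\<Sum>m<n. d m) \<le> (\<Sum>k<n. g k * d k)" if "n \<le> N" for n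
    using that
  proof (induction n)
    case 0
    then show ?case by simp
  next
    case (Suc n)
    have "g (Suc n) * (\<Sum>m<Suc n. d m) \<le> g n * (\<Sum>m<Suc n. d m)"
      using partial[OF Suc.prems] dec[of n] by (rule mult_right_mono[rotated])
    also have "\<dots> = g n * (\<Sum>m<n. d m) + g n * d n"
      by (simp add: algebra_simps)
    also have "\<dots> \<le> (\<Sum>k<Suc n. g k * d k)"
      using Suc by simp
    finally show ?case .
  qed
  then have "g N * (\<Sum>m<N. d m) \<le> (\<Sum>k<N. g k * d k)" by simp
  moreover have "0 \<le> g N * (\<Sum>m<N. d m)"
    using nonneg partial by simp
  ultimately show ?thesis by linarith
qed

lemma sum_powr_le_if_weakly_majorized:
  fixes x y :: "nat \<Rightarrow> real" and a :: real
  assumes a: "1 < a"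
    and x_nonneg: "\<And>k. k < N \<Longrightarrow> 0 \<le> x k" and y_nonneg: "\<And>k. k < N \<Longrightarrow> 0 \<le> y k"
    and x_dec: "\<And>i j. i \<le> j \<Longrightarrow> j < N \<Longrightarrow> x j \<le> x i"
    and maj: "\<And>k. k \<le> N \<Longrightarrow> (\<Sum>m<k. x m) \<le> (\<Sum>m<k. y m)"
  shows "(\<Sum>k<N. x k powr a) \<le> (\<Sum>k<N. y k powr a)"
proof -
  \<comment> \<open>the tangent slopes \<open>g k\<close> at the decreasing \<open>x k\<close> decrease: Abel summation applies\<close>
  define g where "g k = (if k < N then a * x k powr (a - 1) else 0)" for k
  have "g (Suc k) \<le> g k" for k
    using a x_nonneg x_dec[of k "Suc k"] by (auto simp: g_def intro!: powr_mono2)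
  moreover have "0 \<le> g k" for k
    using a by (simp add: g_def)
  ultimately have "0 \<le> (\<Sum>k<N. g k * (y k - x k))"
    by (rule sum_mult_nonneg_if_partial_sums_nonneg) (use maj in \<open>simp add: sum_subtractf\<close>)
  also have "\<dots> \<le> (\<Sum>k<N. y k powr a - x k powr a)"
  proof (rule sum_mono)
    fix k
    assume "k \<in> {..<N}"
    then have "k < N" by simp
    with powr_ge_tangent[OF x_nonneg[OF this] y_nonneg[OF this] a]
    show "g k * (y k - x k) \<le> y k powr a - x k powr a"
      by (simp add: g_def)
  qed
  finally show ?thesis by (simp add: sum_subtractf)
qed

lemma obtain_decreasing_enumeration:
  fixes x :: "'t::finite \<Rightarrow> real"
  obtains e where "bij_betw e {..<CARD('t)} UNIV"
    and "\<And>i j. i \<le> j \<Longrightarrow> j < CARD('t) \<Longrightarrow> x (e j) \<le> x (e i)"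
proof -
  obtain zs where zs: "set zs = (UNIV :: 't set)" "distinct zs"
    using finite_distinct_list[of "UNIV :: 't set"] by auto
  define ws where "ws = sort_key (\<lambda>t. - x t) zs"
  have ws: "set ws = UNIV" "distinct ws" "sorted (map (\<lambda>t. - x t) ws)"
    using zs by (auto simp: ws_def)
  then have len: "length ws = CARD('t)"
    using distinct_card[of ws] by simp
  show ?thesis
  proof
    show "bij_betw ((!) ws) {..<CARD('t)} UNIV"
      using bij_betw_nth[of ws "{..<CARD('t)}" UNIV] ws len by simp
    show "x (ws ! j) \<le> x (ws ! i)" if "i \<le> j" "j < CARD('t)" for i j
      using sorted_nth_mono[OF ws(3) that(1)] that len by simp
  qed
qed

lemma sum_powr_le_if_weakly_majorized_finite:
  fixes x :: "'t::finite \<Rightarrow> real" and y :: "nat \<Rightarrow> real" and a :: real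
  assumes a: "1 < a" and x_nonneg: "\<And>t. 0 \<le> x t"
    and y_nonneg: "\<And>k. k < CARD('t) \<Longrightarrow> 0 \<le> y k"
    and maj: "\<And>S. (\<Sum>t\<in>S. x t) \<le> (\<Sum>m<card S. y m)"
  shows "(\<Sum>t\<in>UNIV. x t powr a) \<le> (\<Sum>k<CARD('t). y k powr a)"
proof -
  obtain e where e: "bij_betw e {..<CARD('t)} UNIV"
    and dec: "\<And>i j. i \<le> j \<Longrightarrow> j < CARD('t) \<Longrightarrow> x (e j) \<le> x (e i)"
    using obtain_decreasing_enumeration[of x] by blast
  have "(\<Sum>t\<in>UNIV. x t powr a) = (\<Sum>k<CARD('t). x (e k) powr a)"
    using sum.reindex_bij_betw[OF e, of "\<lambda>t. x t powr a"] by simp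
  also have "\<dots> \<le> (\<Sum>k<CARD('t). y k powr a)"
  proof (rule sum_powr_le_if_weakly_majorized[OF a])
    fix k :: nat
    assume "k \<le> CARD('t)"
    then have "{..<k} \<subseteq> {..<CARD('t)}" by auto
    then have inj: "inj_on e {..<k}"
      using inj_on_subset[OF bij_betw_imp_inj_on[OF e]] by blast
    have "(\<Sum>m<k. x (e m)) = (\<Sum>t\<in>e ` {..<k}. x t)"
      using sum.reindex[OF inj, of x] by simp
    also have "\<dots> \<le> (\<Sum>m<card (e ` {..<k}). y m)"
      by (rule maj)
    finally show "(\<Sum>m<k. x (e m)) \<le> (\<Sum>m<k. y m)"
      using card_image[OF inj] by simp
  qed (use x_nonneg y_nonneg dec in auto)
  finally show ?thesis .
qed

lemma mult_cnj_self: "z * cnj z = of_real ((cmod z)\<^sup>2)"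
  by (metis complex_norm_square)

lemma cnj_mult_self: "cnj z * z = of_real ((cmod z)\<^sup>2)"
  by (metis complex_norm_square mult.commute)

lemma cinner_zero_left [simp]: "cinner 0 y = 0"
  by (simp add: cinner_def)

lemma cinner_zero_right [simp]: "cinner x 0 = 0"
  by (simp add: cinner_def)

lemma cinner_commute: "cinner x y = cnj (cinner y x)"
  unfolding cinner_def by (simp add: mult.commute)

lemma cinner_add_left: "cinner (x + y) z = cinner x z + cinner y z"
  unfolding cinner_def by (simp add: algebra_simps sum.distrib)

lemma cinner_add_right: "cinner z (x + y) = cinner z x + cinner z y"
  unfolding cinner_def by (simp add: algebra_simps sum.distrib)

lemma cinner_diff_left: "cinner (x - y) z = cinner x z - cinner y z"
  unfolding cinner_def by (simp add: algebra_simps sum_subtractf)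

lemma cinner_diff_right: "cinner z (x - y) = cinner z x - cinner z y"
  unfolding cinner_def by (simp add: algebra_simps sum_subtractf)

lemma cinner_scale_left: "cinner (c *s x) y = cnj c * cinner x y"
  unfolding cinner_def by (simp add: sum_distrib_left mult.assoc)

lemma cinner_scale_right: "cinner x (c *s y) = c * cinner x y"
  unfolding cinner_def by (simp add: sum_distrib_left algebra_simps)

lemma cinner_sum_left: "cinner (sum f I) w = (\<Sum>i\<in>I. cinner (f i) w)"
  by (induction I rule: infinite_finite_induct) (simp_all add: cinner_add_left)

lemma cinner_sum_right: "cinner w (sum f I) = (\<Sum>i\<in>I. cinner w (f i))"
  by (induction I rule: infinite_finite_induct) (simp_all add: cinner_add_right)

lemma cinner_axis_left: "cinner (axis i c) y = cnj c * y $ i"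
proof -
  have eq: "(\<lambda>i'. cnj (axis i c $ i') * y $ i') = (\<lambda>i'. if i' = i then cnj c * y $ i' else 0)"
    by (auto simp: axis_def)
  show ?thesis unfolding cinner_def eq by simp
qed

lemma cinner_self: "cinner x x = of_real (\<Sum>r\<in>UNIV. (cmod (x $ r))\<^sup>2)"
  unfolding cinner_def of_real_sum by (simp add: cnj_mult_self)

lemma matrix_vector_mult_axis: "M *v axis j d = (\<chi> i. M $ i $ j * d)"
  unfolding matrix_vector_mult_def axis_def
  by (simp add: vec_eq_iff if_distrib cong: if_cong)

lemma cinner_matrix_vector_mult:
  "cinner x (M *v y) = (\<Sum>r\<in>UNIV. \<Sum>s\<in>UNIV. cnj (x $ r) * M $ r $ s * y $ s)"
  unfolding cinner_def matrix_vector_mult_def by (simp add: sum_distrib_left mult.assoc)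

lemma cinner_axis_matrix_vector_mult_axis:
  "cinner (axis i c) (M *v axis j d) = cnj c * M $ i $ j * d"
  by (simp add: cinner_axis_left matrix_vector_mult_axis mult.assoc)

lemma cmod_sum_cnj_mult_le:
  fixes f g :: "'a \<Rightarrow> complex"
  shows "cmod (\<Sum>i\<in>I. cnj (f i) * g i)
    \<le> sqrt (\<Sum>i\<in>I. (cmod (f i))\<^sup>2) * sqrt (\<Sum>i\<in>I. (cmod (g i))\<^sup>2)"
proof -
  have "cmod (\<Sum>i\<in>I. cnj (f i) * g i) \<le> (\<Sum>i\<in>I. cmod (f i) * cmod (g i))"
    by (rule order_trans[OF norm_sum]) (simp add: norm_mult)
  also have "\<dots> \<le> sqrt ((\<Sum>i\<in>I. (cmod (f i))\<^sup>2) * (\<Sum>i\<in>I. (cmod (g i))\<^sup>2))"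
    by (rule real_le_rsqrt) (rule Cauchy_Schwarz_ineq_sum)
  finally show ?thesis by (simp add: real_sqrt_mult)
qed

lemma orthonormal_basis_c_completeness:
  fixes a :: "'n::finite \<Rightarrow> complex^'n"
  assumes "orthonormal_basis_c a"
  shows "(\<Sum>i\<in>UNIV. a i $ r * cnj (a i $ s)) = (if r = s then 1 else 0)"
proof -
  define A :: "complex^'n^'n" where "A = (\<chi> r i. a i $ r)"
  define Ah :: "complex^'n^'n" where "Ah = (\<chi> i r. cnj (a i $ r))"
  have "Ah ** A = mat 1"
    using assms unfolding orthonormal_basis_c_def cinner_def
    by (simp add: vec_eq_iff matrix_matrix_mult_def A_def Ah_def mat_def)
  then have "(A ** Ah) $ r $ s = mat 1 $ r $ s"
    using matrix_left_right_inverse by metis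
  then show ?thesis by (simp add: matrix_matrix_mult_def A_def Ah_def mat_def)
qed

lemma orthonormal_basis_c_parseval:
  assumes "orthonormal_basis_c a"
  shows "(\<Sum>i\<in>UNIV. cinner (a i) x * cnj (cinner (a i) y)) = cinner y x"
proof -
  have "(\<Sum>i\<in>UNIV. cinner (a i) x * cnj (cinner (a i) y))
      = (\<Sum>s\<in>UNIV. \<Sum>r\<in>UNIV. x $ r * cnj (y $ s) * (\<Sum>i\<in>UNIV. a i $ s * cnj (a i $ r)))"
    unfolding cinner_def
    by (simp add: sum_distrib_left sum_distrib_right algebra_simps)
      (subst sum.swap, rule sum.cong[OF refl], subst sum.swap, simp)
  also have "\<dots> = cinner y x"
    unfolding orthonormal_basis_c_completeness[OF assms] cinner_def
    by (simp add: if_distrib mult.commute cong: if_cong)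
  finally show ?thesis .
qed

lemma orthonormal_basis_c_trace:
  assumes "orthonormal_basis_c a"
  shows "(\<Sum>i\<in>UNIV. cinner (a i) (M *v a i)) = (\<Sum>r\<in>UNIV. M $ r $ r)"
proof -
  have "(\<Sum>i\<in>UNIV. cinner (a i) (M *v a i))
      = (\<Sum>r\<in>UNIV. \<Sum>s\<in>UNIV. M $ r $ s * (\<Sum>i\<in>UNIV. a i $ s * cnj (a i $ r)))"
    unfolding cinner_matrix_vector_mult
    by (simp add: sum_distrib_left algebra_simps)
      (subst sum.swap, rule sum.cong[OF refl], subst sum.swap, simp)
  also have "\<dots> = (\<Sum>r\<in>UNIV. M $ r $ r)"
    unfolding orthonormal_basis_c_completeness[OF assms] by (simp add: if_distrib cong: if_cong)
  finally show ?thesis .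
qed

lemma cinner_sum_orthonormal_self:
  assumes "orthonormal_basis_c a"
  shows "cinner (\<Sum>i\<in>I. f i *s a i) (\<Sum>i\<in>I. f i *s a i) = of_real (\<Sum>i\<in>I. (cmod (f i))\<^sup>2)"
proof -
  have "cinner (\<Sum>i\<in>I. f i *s a i) (\<Sum>i\<in>I. f i *s a i)
      = (\<Sum>i\<in>I. f i * (\<Sum>i'\<in>I. cnj (f i') * (if i' = i then 1 else 0)))"
    using assms unfolding orthonormal_basis_c_def cinner_sum_left cinner_sum_right
      cinner_scale_left cinner_scale_right
    by simp
  also have "\<dots> = (\<Sum>i\<in>I. f i * cnj (f i))"
    by (rule sum.cong[OF refl]) (simp add: if_distrib sum.delta cong: if_cong)
  finally show ?thesis
    unfolding of_real_sum by (simp add: mult_cnj_self)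
qed

section \<open>Pure states: two families of projections\<close>

lemma cmod_cinner_sums_le:
  fixes a :: "'i \<Rightarrow> complex^'n::finite" and b :: "'j::finite \<Rightarrow> complex^'n"
  assumes lam: "0 \<le> lam"
    and bound: "\<And>x. (\<Sum>i\<in>I. (cmod (\<Sum>j\<in>J. cinner (a i) (b j) * x $ j))\<^sup>2)
                    \<le> lam\<^sup>2 * (\<Sum>j\<in>J. (cmod (x $ j))\<^sup>2)"
  shows "cmod (cinner (\<Sum>i\<in>I. \<alpha> i *s a i) (\<Sum>j\<in>J. \<beta> j *s b j))
    \<le> lam * sqrt (\<Sum>i\<in>I. (cmod (\<alpha> i))\<^sup>2) * sqrt (\<Sum>j\<in>J. (cmod (\<beta> j))\<^sup>2)"
proof -
  define v where "v i = (\<Sum>j\<in>J. cinner (a i) (b j) * \<beta> j)" for i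
  have "cinner (\<Sum>i\<in>I. \<alpha> i *s a i) (\<Sum>j\<in>J. \<beta> j *s b j) = (\<Sum>i\<in>I. cnj (\<alpha> i) * v i)"
    unfolding v_def cinner_sum_left cinner_sum_right cinner_scale_left cinner_scale_right
    by (simp add: sum_distrib_left algebra_simps) (rule sum.swap)
  then have "cmod (cinner (\<Sum>i\<in>I. \<alpha> i *s a i) (\<Sum>j\<in>J. \<beta> j *s b j))
      \<le> sqrt (\<Sum>i\<in>I. (cmod (\<alpha> i))\<^sup>2) * sqrt (\<Sum>i\<in>I. (cmod (v i))\<^sup>2)"
    using cmod_sum_cnj_mult_le by metis
  also have "\<dots> \<le> sqrt (\<Sum>i\<in>I. (cmod (\<alpha> i))\<^sup>2) * (lam * sqrt (\<Sum>j\<in>J. (cmod (\<beta> j))\<^sup>2))"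
  proof (rule mult_left_mono)
    have "sqrt (\<Sum>i\<in>I. (cmod (v i))\<^sup>2) \<le> sqrt (lam\<^sup>2 * (\<Sum>j\<in>J. (cmod (\<beta> j))\<^sup>2))"
      using bound[of "\<chi> j. \<beta> j"] by (simp add: v_def)
    then show "sqrt (\<Sum>i\<in>I. (cmod (v i))\<^sup>2) \<le> lam * sqrt (\<Sum>j\<in>J. (cmod (\<beta> j))\<^sup>2)"
      using lam by (simp add: real_sqrt_mult)
  qed (simp add: sum_nonneg)
  finally show ?thesis by (simp only: ac_simps)
qed

lemma sum_sq_add_sums_two_bases_le:
  fixes a b :: "'n::finite \<Rightarrow> complex^'n"
  assumes oa: "orthonormal_basis_c a" and ob: "orthonormal_basis_c b" and lam: "0 \<le> lam"
    and bound: "\<And>x. (\<Sum>i\<in>I. (cmod (\<Sum>j\<in>J. cinner (a i) (b j) * x $ j))\<^sup>2)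
                    \<le> lam\<^sup>2 * (\<Sum>j\<in>J. (cmod (x $ j))\<^sup>2)"
  shows "(\<Sum>r\<in>UNIV. (cmod (((\<Sum>i\<in>I. \<alpha> i *s a i) + (\<Sum>j\<in>J. \<beta> j *s b j)) $ r))\<^sup>2)
    \<le> (1 + lam) * ((\<Sum>i\<in>I. (cmod (\<alpha> i))\<^sup>2) + (\<Sum>j\<in>J. (cmod (\<beta> j))\<^sup>2))"
proof -
  define za where "za = (\<Sum>i\<in>I. \<alpha> i *s a i)"
  define zb where "zb = (\<Sum>j\<in>J. \<beta> j *s b j)"
  define A where "A = (\<Sum>i\<in>I. (cmod (\<alpha> i))\<^sup>2)"
  define B where "B = (\<Sum>j\<in>J. (cmod (\<beta> j))\<^sup>2)"
  have A: "0 \<le> A" and B: "0 \<le> B"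
    by (simp_all add: A_def B_def sum_nonneg)
  have "cmod (cinner za zb) \<le> lam * sqrt A * sqrt B"
    unfolding za_def zb_def A_def B_def by (rule cmod_cinner_sums_le[OF lam bound])
  also have "\<dots> \<le> lam * ((A + B) / 2)"
    using arith_geo_mean_sqrt[OF A B] lam by (simp add: real_sqrt_mult mult.assoc mult_left_mono)
  finally have cross: "2 * Re (cinner za zb) \<le> lam * (A + B)"
    using complex_Re_le_cmod[of "cinner za zb"] by simp
  have za: "cinner za za = of_real A"
    unfolding za_def A_def by (rule cinner_sum_orthonormal_self[OF oa])
  have zb: "cinner zb zb = of_real B"
    unfolding zb_def B_def by (rule cinner_sum_orthonormal_self[OF ob])
  have "(\<Sum>r\<in>UNIV. (cmod ((za + zb) $ r))\<^sup>2) = Re (cinner (za + zb) (za + zb))"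
    by (simp add: cinner_self)
  also have "\<dots> = A + B + 2 * Re (cinner za zb)"
    unfolding cinner_add_left cinner_add_right cinner_commute[of zb za] za zb by simp
  finally show ?thesis
    using cross unfolding za_def zb_def A_def B_def by (simp add: algebra_simps)
qed

lemma sum_sq_coeffs_two_bases_le:
  fixes a b :: "'n::finite \<Rightarrow> complex^'n"
  assumes oa: "orthonormal_basis_c a" and ob: "orthonormal_basis_c b" and lam: "0 \<le> lam"
    and bound: "\<And>x. (\<Sum>i\<in>I. (cmod (\<Sum>j\<in>J. cinner (a i) (b j) * x $ j))\<^sup>2)
                    \<le> lam\<^sup>2 * (\<Sum>j\<in>J. (cmod (x $ j))\<^sup>2)"
  shows "(\<Sum>i\<in>I. (cmod (cinner (a i) w))\<^sup>2) + (\<Sum>j\<in>J. (cmod (cinner (b j) w))\<^sup>2)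
    \<le> (1 + lam) * (\<Sum>r\<in>UNIV. (cmod (w $ r))\<^sup>2)"
proof -
  \<comment> \<open>test \<open>w\<close> against the sum \<open>z\<close> of its projections onto the two spans\<close>
  define z where "z = (\<Sum>i\<in>I. cinner (a i) w *s a i) + (\<Sum>j\<in>J. cinner (b j) w *s b j)"
  define S where "S = (\<Sum>i\<in>I. (cmod (cinner (a i) w))\<^sup>2) + (\<Sum>j\<in>J. (cmod (cinner (b j) w))\<^sup>2)"
  define W where "W = (\<Sum>r\<in>UNIV. (cmod (w $ r))\<^sup>2)"
  define Z where "Z = (\<Sum>r\<in>UNIV. (cmod (z $ r))\<^sup>2)"
  have S: "0 \<le> S" and W: "0 \<le> W" and Z: "0 \<le> Z"
    by (simp_all add: S_def W_def Z_def sum_nonneg)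
  have "cinner w (cinner v w *s v) = of_real ((cmod (cinner v w))\<^sup>2)" for v
    by (simp add: cinner_scale_right cinner_commute[of w v] mult_cnj_self)
  then have "cinner w z = of_real S"
    unfolding z_def S_def cinner_add_right cinner_sum_right by simp
  then have "cmod (cinner w z) = S"
    using S by simp
  moreover have "cmod (cinner w z) \<le> sqrt W * sqrt Z"
    unfolding cinner_def W_def Z_def by (rule cmod_sum_cnj_mult_le)
  ultimately have SWZ: "S\<^sup>2 \<le> W * Z"
    using S W Z by (metis power_mono real_sqrt_mult real_sqrt_pow2 mult_nonneg_nonneg)
  have "Z \<le> (1 + lam) * S"
    unfolding Z_def S_def z_def by (rule sum_sq_add_sums_two_bases_le[OF oa ob lam bound])
  then have "S\<^sup>2 \<le> W * ((1 + lam) * S)"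
    using SWZ W by (meson mult_left_mono order_trans)
  then have "S * S \<le> ((1 + lam) * W) * S"
    by (simp add: power2_eq_square algebra_simps)
  then have "S \<le> (1 + lam) * W"
    using S lam W by (cases "S = 0") simp_all
  then show ?thesis
    unfolding S_def W_def .
qed

section \<open>From pure to mixed states\<close>

definition hermitian_mat :: "complex^'n::finite^'n \<Rightarrow> bool" where
  "hermitian_mat M \<longleftrightarrow> (\<forall>i j. M $ i $ j = cnj (M $ j $ i))"

definition psd_mat :: "complex^'n::finite^'n \<Rightarrow> bool" where
  "psd_mat M \<longleftrightarrow> (\<forall>x. 0 \<le> Re (cinner x (M *v x)))"

definition mat_pairing :: "complex^'n::finite^'n \<Rightarrow> complex^'n^'n \<Rightarrow> complex" where
  "mat_pairing c M = (\<Sum>r\<in>UNIV. \<Sum>s\<in>UNIV. c $ r $ s * M $ r $ s)"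

definition outer :: "complex^'n::finite \<Rightarrow> complex^'n^'n" where
  "outer w = (\<chi> r s. w $ r * cnj (w $ s))"

definition nonzero_columns :: "complex^'n::finite^'n \<Rightarrow> 'n set" where
  "nonzero_columns M = {k. \<exists>r. M $ r $ k \<noteq> 0}"

text \<open>One pivoting step: subtract the rank-one part through row and column \<open>k\<close>, which
  leaves the Schur complement of the pivot \<open>M $ k $ k\<close> in place and zeroes row and
  column \<open>k\<close>.\<close>
definition schur_complement :: "complex^'n::finite^'n \<Rightarrow> 'n \<Rightarrow> complex^'n^'n" where
  "schur_complement M k = (\<chi> i j. M $ i $ j - M $ i $ k * M $ k $ j / M $ k $ k)"

lemma hermitian_mat_cnj: "hermitian_mat M \<Longrightarrow> cnj (M $ i $ j) = M $ j $ i"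
  unfolding hermitian_mat_def by (metis complex_cnj_cnj)

lemma psd_mat_column_eq_0:
  assumes herm: "hermitian_mat M" and psd: "psd_mat M" and kk: "M $ k $ k = 0"
  shows "M $ r $ k = 0"
proof (rule ccontr)
  define z where "z = M $ r $ k"
  assume "M $ r $ k \<noteq> 0"
  then have z: "z \<noteq> 0" by (simp add: z_def)
  have kr: "M $ k $ r = cnj z"
    using hermitian_mat_cnj[OF herm, of r k] by (simp add: z_def)
  \<comment> \<open>the test vector \<open>e\<^sub>r - s z\<^sup>* e\<^sub>k\<close> makes the quadratic form negative for large \<open>s\<close>\<close>
  define s where "s = (\<bar>Re (M $ r $ r)\<bar> + 1) / (2 * (cmod z)\<^sup>2)"
  define t where "t = - (of_real s * cnj z)"
  define x where "x = axis r (1::complex) + axis k t"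
  have "cinner x (M *v x) = M $ r $ r + (z * t + cnj t * cnj z)"
    unfolding x_def matrix_vector_right_distrib cinner_add_left cinner_add_right
      cinner_axis_matrix_vector_mult_axis
    using kk kr by (simp add: z_def add.assoc)
  also have "z * t + cnj t * cnj z = - of_real (2 * s * (cmod z)\<^sup>2)"
    unfolding t_def using mult_cnj_self[of z] by (simp add: algebra_simps)
  finally have "cinner x (M *v x) = M $ r $ r - of_real (2 * s * (cmod z)\<^sup>2)"
    by simp
  moreover have "2 * s * (cmod z)\<^sup>2 = \<bar>Re (M $ r $ r)\<bar> + 1"
    using z by (simp add: s_def)
  ultimately have "Re (cinner x (M *v x)) < 0" by simp
  with psd show False by (simp add: psd_mat_def not_le[symmetric])
qed

lemma psd_mat_diag:
  assumes "hermitian_mat M" "psd_mat M"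
  shows "M $ k $ k = of_real (Re (M $ k $ k))" "0 \<le> Re (M $ k $ k)"
proof -
  have "cnj (M $ k $ k) = M $ k $ k"
    using hermitian_mat_cnj[OF assms(1)] .
  then show "M $ k $ k = of_real (Re (M $ k $ k))"
    by (simp add: complex_eq_iff)
  have "Re (M $ k $ k) = Re (cinner (axis k 1) (M *v axis k 1))"
    by (simp add: cinner_axis_matrix_vector_mult_axis)
  then show "0 \<le> Re (M $ k $ k)"
    using assms(2) by (simp add: psd_mat_def)
qed

lemma hermitian_schur_complement:
  assumes herm: "hermitian_mat M"
  shows "hermitian_mat (schur_complement M k)"
proof -
  have "cnj (M $ i $ j) = M $ j $ i" for i j
    using hermitian_mat_cnj[OF herm] .
  then show ?thesis
    unfolding hermitian_mat_def schur_complement_def by (simp add: mult.commute)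
qed

lemma psd_schur_complement:
  assumes herm: "hermitian_mat M" and psd: "psd_mat M" and d: "M $ k $ k \<noteq> 0"
  shows "psd_mat (schur_complement M k)"
  unfolding psd_mat_def
proof
  fix x
  define d where "d = M $ k $ k"
  define \<gamma> where "\<gamma> = (M *v x) $ k"
  define t where "t = \<gamma> / d"
  have row_k: "(\<Sum>i\<in>UNIV. cnj (x $ i) * M $ i $ k) = cnj \<gamma>"
    using hermitian_mat_cnj[OF herm] by (simp add: \<gamma>_def matrix_vector_mult_def mult.commute)
  have form_axis: "cinner x (M *v axis k c) = cnj \<gamma> * c" for c
  proof -
    have "cinner x (M *v axis k c) = (\<Sum>i\<in>UNIV. cnj (x $ i) * M $ i $ k) * c"
      by (simp add: cinner_def matrix_vector_mult_axis sum_distrib_right mult.assoc)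
    then show ?thesis by (simp add: row_k)
  qed
  have Sx: "schur_complement M k *v x = M *v x - M *v axis k t"
    unfolding schur_complement_def matrix_vector_mult_axis
    by (simp add: vec_eq_iff matrix_vector_mult_def t_def \<gamma>_def d_def left_diff_distrib
        sum_subtractf sum_distrib_left sum_divide_distrib mult.assoc)
  \<comment> \<open>the form of the Schur complement at \<open>x\<close> is the form of \<open>M\<close> at \<open>x - t e\<^sub>k\<close>\<close>
  have "cinner (x - axis k t) (M *v (x - axis k t))
      = cinner x (M *v x) - cnj \<gamma> * t - cnj t * \<gamma> + cnj t * (d * t)"
    unfolding matrix_vector_mult_diff_distrib cinner_diff_left cinner_diff_right form_axis
      cinner_axis_left
    by (simp add: d_def \<gamma>_def matrix_vector_mult_axis mult.assoc)
  also have "\<dots> = cinner x (M *v x) - cnj \<gamma> * t"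
    using d by (simp add: t_def d_def)
  also have "\<dots> = cinner x (schur_complement M k *v x)"
    unfolding Sx matrix_vector_mult_diff_distrib cinner_diff_right form_axis ..
  finally show "0 \<le> Re (cinner x (schur_complement M k *v x))"
    using psd unfolding psd_mat_def by metis
qed

lemma nonzero_columns_schur_complement:
  assumes "M $ k $ k \<noteq> 0"
  shows "nonzero_columns (schur_complement M k) \<subseteq> nonzero_columns M - {k}"
proof
  fix j
  assume "j \<in> nonzero_columns (schur_complement M k)"
  then obtain i where "M $ i $ j \<noteq> M $ i $ k * M $ k $ j / M $ k $ k"
    by (auto simp: nonzero_columns_def schur_complement_def)
  then have "j \<noteq> k" "M $ i $ j \<noteq> 0 \<or> M $ k $ j \<noteq> 0"
    using assms by auto
  then show "j \<in> nonzero_columns M - {k}"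
    by (auto simp: nonzero_columns_def)
qed

lemma mat_pairing_schur_complement:
  assumes "hermitian_mat M"
  shows "mat_pairing c M
    = mat_pairing c (schur_complement M k) + mat_pairing c (outer (column k M)) / M $ k $ k"
proof -
  have "outer (column k M) $ i $ j = M $ i $ k * M $ k $ j" for i j
    using hermitian_mat_cnj[OF assms] by (simp add: outer_def column_def)
  then show ?thesis
    unfolding mat_pairing_def schur_complement_def
    by (simp add: right_diff_distrib sum_subtractf sum_divide_distrib)
qed

lemma mat_pairing_nonneg_if_nonneg_on_outer:
  assumes pure: "\<And>w. 0 \<le> Re (mat_pairing c (outer w))"
    and "hermitian_mat M" "psd_mat M"
  shows "0 \<le> Re (mat_pairing c M)"
  using assms(2,3)
proof (induction "card (nonzero_columns M)" arbitrary: M rule: less_induct)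
  case less
  show ?case
  proof (cases "nonzero_columns M = {}")
    case True
    then have "M = 0" by (auto simp: nonzero_columns_def vec_eq_iff)
    then show ?thesis by (simp add: mat_pairing_def)
  next
    case False
    then obtain k where k: "k \<in> nonzero_columns M" by auto
    then have d: "M $ k $ k \<noteq> 0"
      using psd_mat_column_eq_0[OF less.prems] by (auto simp: nonzero_columns_def)
    have "card (nonzero_columns (schur_complement M k)) < card (nonzero_columns M)"
      using nonzero_columns_schur_complement[OF d] k
      by (meson card_Diff1_less finite order_le_less_trans card_mono)
    then have "0 \<le> Re (mat_pairing c (schur_complement M k))"
      using less.hyps hermitian_schur_complement[OF less.prems(1)]
        psd_schur_complement[OF less.prems d] by blast
    moreover have "0 \<le> Re (mat_pairing c (outer (column k M)) / M $ k $ k)"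
      using pure psd_mat_diag[OF less.prems, of k]
      by (metis Re_divide_of_real divide_nonneg_nonneg)
    ultimately show ?thesis
      unfolding mat_pairing_schur_complement[OF less.prems(1), of c k] by simp
  qed
qed

definition quadratic_coeffs :: "complex^'n::finite \<Rightarrow> complex^'n^'n" where
  "quadratic_coeffs v = (\<chi> r s. cnj (v $ r) * v $ s)"

lemma mat_pairing_diff: "mat_pairing (c - c') M = mat_pairing c M - mat_pairing c' M"
  unfolding mat_pairing_def by (simp add: left_diff_distrib sum_subtractf)

lemma mat_pairing_sum: "mat_pairing (\<Sum>i\<in>I. c i) M = (\<Sum>i\<in>I. mat_pairing (c i) M)"
  by (induction I rule: infinite_finite_induct)
    (simp_all add: mat_pairing_def distrib_right sum.distrib)

lemma mat_pairing_quadratic_coeffs: "mat_pairing (quadratic_coeffs v) M = cinner v (M *v v)"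
  unfolding mat_pairing_def quadratic_coeffs_def cinner_matrix_vector_mult
  by (simp add: algebra_simps)

lemma mat_pairing_mat: "mat_pairing (mat c) M = c * (\<Sum>r\<in>UNIV. M $ r $ r)"
proof -
  have "mat_pairing (mat c) M = (\<Sum>r\<in>UNIV. \<Sum>s\<in>UNIV. if s = r then c * M $ r $ s else 0)"
    unfolding mat_pairing_def mat_def by (rule sum.cong[OF refl])+ auto
  then show ?thesis by (simp add: sum_distrib_left)
qed

lemma cinner_outer: "cinner v (outer w *v v) = of_real ((cmod (cinner v w))\<^sup>2)"
proof -
  have "outer w *v v = cinner w v *s w"
    unfolding outer_def matrix_vector_mult_def cinner_def
    by (simp add: vec_eq_iff sum_distrib_left algebra_simps)
  then show ?thesis
    by (simp add: cinner_scale_right cinner_commute[of w v] mult_cnj_self mult.commute)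
qed

lemma trace_outer: "(\<Sum>r\<in>UNIV. outer w $ r $ r) = of_real (\<Sum>r\<in>UNIV. (cmod (w $ r))\<^sup>2)"
  using cinner_self[of w] by (simp add: outer_def cinner_def mult.commute)

lemma density_matrixD:
  assumes "density_matrix \<rho>"
  shows "hermitian_mat \<rho>" "psd_mat \<rho>" "(\<Sum>r\<in>UNIV. \<rho> $ r $ r) = 1"
  using assms unfolding density_matrix_def hermitian_mat_def psd_mat_def by blast+

lemma sum_outcomes_two_bases_le:
  fixes a b :: "'n::finite \<Rightarrow> complex^'n"
  assumes oa: "orthonormal_basis_c a" and ob: "orthonormal_basis_c b" and lam: "0 \<le> lam"
    and \<rho>: "density_matrix \<rho>"
    and bound: "\<And>x. (\<Sum>i\<in>I. (cmod (\<Sum>j\<in>J. cinner (a i) (b j) * x $ j))\<^sup>2)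
                    \<le> lam\<^sup>2 * (\<Sum>j\<in>J. (cmod (x $ j))\<^sup>2)"
  shows "(\<Sum>i\<in>I. Re (cinner (a i) (\<rho> *v a i))) + (\<Sum>j\<in>J. Re (cinner (b j) (\<rho> *v b j)))
    \<le> 1 + lam"
proof -
  define c where "c = mat (of_real (1 + lam))
    - (\<Sum>i\<in>I. quadratic_coeffs (a i)) - (\<Sum>j\<in>J. quadratic_coeffs (b j))"
  have c: "mat_pairing c M = of_real (1 + lam) * (\<Sum>r\<in>UNIV. M $ r $ r)
      - (\<Sum>i\<in>I. cinner (a i) (M *v a i)) - (\<Sum>j\<in>J. cinner (b j) (M *v b j))" for M
    unfolding c_def mat_pairing_diff mat_pairing_sum mat_pairing_mat mat_pairing_quadratic_coeffs ..
  have "0 \<le> Re (mat_pairing c (outer w))" for w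
    using sum_sq_coeffs_two_bases_le[OF oa ob lam bound, of w]
    by (simp add: c trace_outer cinner_outer Re_sum)
  moreover note density_matrixD[OF \<rho>]
  ultimately show ?thesis
    using mat_pairing_nonneg_if_nonneg_on_outer[of c \<rho>] by (simp add: c Re_sum)
qed

lemma density_matrix_outcome_nonneg: "density_matrix \<rho> \<Longrightarrow> 0 \<le> Re (cinner v (\<rho> *v v))"
  using density_matrixD(2) unfolding psd_mat_def by blast

lemma density_matrix_sum_outcomes:
  assumes "orthonormal_basis_c a" "density_matrix \<rho>"
  shows "(\<Sum>i\<in>UNIV. Re (cinner (a i) (\<rho> *v a i))) = 1"
proof -
  have "(\<Sum>i\<in>UNIV. cinner (a i) (\<rho> *v a i)) = 1"
    using orthonormal_basis_c_trace[OF assms(1), of \<rho>] density_matrixD(3)[OF assms(2)] by simp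
  from arg_cong[where f=Re, OF this] show ?thesis
    by simp
qed

section \<open>Submatrix norms\<close>

definition submatrix_gains :: "complex^'n::finite^'n \<Rightarrow> 'n set \<Rightarrow> 'n set \<Rightarrow> real set" where
  "submatrix_gains U I J = {sqrt (\<Sum>i\<in>I. (cmod (\<Sum>j\<in>J. U $ i $ j * x $ j))\<^sup>2) | x.
     (\<Sum>j\<in>J. (cmod (x $ j))\<^sup>2) = 1}"

lemma submatrix_norm_eq_Sup: "submatrix_norm U I J = Sup (submatrix_gains U I J)"
  unfolding submatrix_norm_def submatrix_gains_def ..

lemma bdd_above_submatrix_gains: "bdd_above (submatrix_gains U I J)"
proof (rule bdd_aboveI)
  fix t
  assume "t \<in> submatrix_gains U I J"
  then obtain x where x: "(\<Sum>j\<in>J. (cmod (x $ j))\<^sup>2) = 1"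
    and t: "t = sqrt (\<Sum>i\<in>I. (cmod (\<Sum>j\<in>J. U $ i $ j * x $ j))\<^sup>2)"
    unfolding submatrix_gains_def by auto
  have "cmod (x $ j) \<le> 1" if "j \<in> J" for j
  proof -
    have "(cmod (x $ j))\<^sup>2 \<le> 1\<^sup>2"
      using member_le_sum[of j J "\<lambda>j. (cmod (x $ j))\<^sup>2"] that x by simp
    then show ?thesis by (rule power2_le_imp_le) simp
  qed
  then have "cmod (\<Sum>j\<in>J. U $ i $ j * x $ j) \<le> (\<Sum>j\<in>J. cmod (U $ i $ j))" for i
    by (intro order_trans[OF norm_sum] sum_mono) (simp add: norm_mult mult_left_le)
  then have "(\<Sum>i\<in>I. (cmod (\<Sum>j\<in>J. U $ i $ j * x $ j))\<^sup>2) \<le> (\<Sum>i\<in>I. (\<Sum>j\<in>J. cmod (U $ i $ j))\<^sup>2)"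
    by (intro sum_mono power_mono) auto
  then show "t \<le> sqrt (\<Sum>i\<in>I. (\<Sum>j\<in>J. cmod (U $ i $ j))\<^sup>2)"
    unfolding t by simp
qed

lemma submatrix_norm_ge:
  assumes "(\<Sum>j\<in>J. (cmod (x $ j))\<^sup>2) = 1"
  shows "sqrt (\<Sum>i\<in>I. (cmod (\<Sum>j\<in>J. U $ i $ j * x $ j))\<^sup>2) \<le> submatrix_norm U I J"
  unfolding submatrix_norm_eq_Sup using assms
  by (intro cSup_upper[OF _ bdd_above_submatrix_gains]) (auto simp: submatrix_gains_def)

lemma sum_sq_axis:
  fixes J :: "'n::finite set"
  assumes "j0 \<in> J"
  shows "(\<Sum>j\<in>J. (cmod (axis j0 (1::complex) $ j))\<^sup>2) = 1"
proof -
  have eq: "(\<lambda>j. (cmod (axis j0 (1::complex) $ j))\<^sup>2) = (\<lambda>j. if j = j0 then 1 else 0)"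
    by (auto simp: axis_def)
  show ?thesis
    unfolding eq using assms by simp
qed

lemma submatrix_norm_nonneg:
  fixes U :: "complex^'n::finite^'n"
  assumes "J \<noteq> {}"
  shows "0 \<le> submatrix_norm U I J"
proof -
  obtain j0 where "j0 \<in> J" using assms by auto
  from submatrix_norm_ge[OF sum_sq_axis[OF this], where I=I and U=U] show ?thesis
    by (meson order.trans real_sqrt_ge_zero sum_nonneg zero_le_power2)
qed

lemma submatrix_norm_mono:
  fixes U :: "complex^'n::finite^'n"
  assumes "J \<noteq> {}" "I \<subseteq> I'"
  shows "submatrix_norm U I J \<le> submatrix_norm U I' J"
  unfolding submatrix_norm_eq_Sup
proof (rule cSup_mono[OF _ bdd_above_submatrix_gains])
  obtain j0 where "j0 \<in> J" using assms by auto
  then show "submatrix_gains U I J \<noteq> {}"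
    using sum_sq_axis[of j0 J] by (auto simp: submatrix_gains_def)
  fix t
  assume "t \<in> submatrix_gains U I J"
  then obtain x where x: "(\<Sum>j\<in>J. (cmod (x $ j))\<^sup>2) = 1"
    and t: "t = sqrt (\<Sum>i\<in>I. (cmod (\<Sum>j\<in>J. U $ i $ j * x $ j))\<^sup>2)"
    unfolding submatrix_gains_def by auto
  have "t \<le> sqrt (\<Sum>i\<in>I'. (cmod (\<Sum>j\<in>J. U $ i $ j * x $ j))\<^sup>2)"
    unfolding t using assms(2) by (intro real_sqrt_le_mono sum_mono2) auto
  moreover have "sqrt (\<Sum>i\<in>I'. (cmod (\<Sum>j\<in>J. U $ i $ j * x $ j))\<^sup>2) \<in> submatrix_gains U I' J"
    unfolding submatrix_gains_def using x by blast
  ultimately show "\<exists>t'\<in>submatrix_gains U I' J. t \<le> t'" by blast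
qed

lemma sum_sq_submatrix_mult_le:
  fixes U :: "complex^'n::finite^'n"
  assumes "J \<noteq> {}"
  shows "(\<Sum>i\<in>I. (cmod (\<Sum>j\<in>J. U $ i $ j * x $ j))\<^sup>2)
    \<le> (submatrix_norm U I J)\<^sup>2 * (\<Sum>j\<in>J. (cmod (x $ j))\<^sup>2)"
proof -
  define n where "n = (\<Sum>j\<in>J. (cmod (x $ j))\<^sup>2)"
  show ?thesis
  proof (cases "n = 0")
    case True
    then have "\<forall>j\<in>J. x $ j = 0" by (simp add: n_def sum_nonneg_eq_0_iff)
    then show ?thesis by simp
  next
    case False
    then have n: "0 < n" by (simp add: n_def order_le_neq_trans sum_nonneg)
    define x' where "x' = of_real (1 / sqrt n) *s x"
    have "(\<Sum>j\<in>J. (cmod (x' $ j))\<^sup>2) = (\<Sum>j\<in>J. (cmod (x $ j))\<^sup>2) / n"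
      using n by (simp add: x'_def norm_mult norm_divide power_divide sum_divide_distrib)
    then have "(\<Sum>j\<in>J. (cmod (x' $ j))\<^sup>2) = 1"
      using n by (simp add: n_def)
    from submatrix_norm_ge[OF this, where I=I and U=U]
    have "sqrt (\<Sum>i\<in>I. (cmod (\<Sum>j\<in>J. U $ i $ j * x' $ j))\<^sup>2) \<le> submatrix_norm U I J" .
    moreover have "(\<Sum>i\<in>I. (cmod (\<Sum>j\<in>J. U $ i $ j * x' $ j))\<^sup>2)
        = (\<Sum>i\<in>I. (cmod (\<Sum>j\<in>J. U $ i $ j * x $ j))\<^sup>2) / n"
    proof -
      have "(\<Sum>j\<in>J. U $ i $ j * x' $ j) = (\<Sum>j\<in>J. U $ i $ j * x $ j) / of_real (sqrt n)" for i
        by (simp add: x'_def sum_divide_distrib)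
      then show ?thesis
        using n by (simp only: norm_divide power_divide) (simp add: sum_divide_distrib)
    qed
    ultimately have "sqrt ((\<Sum>i\<in>I. (cmod (\<Sum>j\<in>J. U $ i $ j * x $ j))\<^sup>2) / n)
        \<le> submatrix_norm U I J"
      by simp
    then have "(\<Sum>i\<in>I. (cmod (\<Sum>j\<in>J. U $ i $ j * x $ j))\<^sup>2) / n \<le> (submatrix_norm U I J)\<^sup>2"
      by (rule sqrt_le_D)
    then show ?thesis
      using n by (simp add: n_def pos_divide_le_eq mult.commute)
  qed
qed

lemma finite_submatrix_norms:
  fixes U :: "complex^'n::finite^'n"
  shows "finite {submatrix_norm U I J | I J. P I J}"
proof (rule finite_subset)
  show "{submatrix_norm U I J | I J. P I J} \<subseteq> (\<lambda>(I, J). submatrix_norm U I J) ` UNIV"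
  proof
    fix t
    assume "t \<in> {submatrix_norm U I J | I J. P I J}"
    then obtain I J where "t = submatrix_norm U I J" by blast
    then show "t \<in> (\<lambda>(I, J). submatrix_norm U I J) ` UNIV"
      by (auto intro: image_eqI[of _ _ "(I, J)"])
  qed
qed simp

lemma submatrix_norm_le_s_seq:
  fixes U :: "complex^'n::finite^'n"
  assumes "I \<noteq> {}" "J \<noteq> {}" "card I + card J = k + 1"
  shows "submatrix_norm U I J \<le> s_seq U k"
  unfolding s_seq_def using assms by (intro Max_ge[OF finite_submatrix_norms]) auto

lemma obtain_index_sets:
  assumes "1 \<le> k" "k \<le> CARD('n)"
  obtains I J :: "'n::finite set" where "I \<noteq> {}" "J \<noteq> {}" "card I + card J = k + 1"
proof -
  obtain I :: "'n set" where I: "card I = k"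
    using obtain_subset_with_card_n[of k "UNIV :: 'n set"] assms by auto
  obtain j :: 'n where True by simp
  show ?thesis
    using I assms by (intro that[of I "{j}"]) auto
qed

lemma s_seq_nonneg:
  fixes U :: "complex^'n::finite^'n"
  assumes "1 \<le> k" "k \<le> CARD('n)"
  shows "0 \<le> s_seq U k"
proof -
  obtain I J :: "'n set" where IJ: "I \<noteq> {}" "J \<noteq> {}" "card I + card J = k + 1"
    using assms by (rule obtain_index_sets)
  then show ?thesis
    using submatrix_norm_nonneg[OF IJ(2), of U I] submatrix_norm_le_s_seq[OF IJ, of U] by linarith
qed

lemma s_seq_mono:
  fixes U :: "complex^'n::finite^'n"
  assumes "1 \<le> k" "k < CARD('n)"
  shows "s_seq U k \<le> s_seq U (Suc k)"
proof -
  have "k \<le> CARD('n)"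
    using assms(2) by simp
  with assms(1) obtain I0 J0 :: "'n set" where "I0 \<noteq> {}" "J0 \<noteq> {}" "card I0 + card J0 = k + 1"
    by (rule obtain_index_sets)
  then have nonempty: "{submatrix_norm U I J | I J. I \<noteq> {} \<and> J \<noteq> {} \<and> card I + card J = k + 1} \<noteq> {}"
    by blast
  show ?thesis
    unfolding s_seq_def[of U k]
  proof (subst Max_le_iff[OF finite_submatrix_norms nonempty], intro ballI)
    fix t
    assume "t \<in> {submatrix_norm U I J | I J. I \<noteq> {} \<and> J \<noteq> {} \<and> card I + card J = k + 1}"
    then obtain I J where IJ: "t = submatrix_norm U I J" "I \<noteq> {}" "J \<noteq> {}"
      "card I + card J = k + 1"
      by blast
    have "1 \<le> card J"
      using IJ(3) by (simp add: Suc_leI card_gt_0_iff)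
    then have "card I < CARD('n)"
      using IJ(4) assms by simp
    then have "I \<noteq> UNIV"
      by auto
    then obtain i where i: "i \<notin> I"
      by auto
    have "t \<le> submatrix_norm U (insert i I) J"
      unfolding IJ(1) using IJ(3) by (intro submatrix_norm_mono) auto
    also have "\<dots> \<le> s_seq U (Suc k)"
      using IJ i by (intro submatrix_norm_le_s_seq) auto
    finally show "t \<le> s_seq U (Suc k)" .
  qed
qed

lemma W_seq_nonneg:
  fixes U :: "complex^'n::finite^'n"
  assumes "1 \<le> k" "k \<le> CARD('n)"
  shows "0 \<le> W_seq U k"
proof (cases "k = 1")
  case True
  then show ?thesis using s_seq_nonneg[of 1] assms by (simp add: W_seq_def)
next
  case False
  then have "s_seq U (k - 1) \<le> s_seq U (Suc (k - 1))"
    using assms by (intro s_seq_mono) auto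
  then show ?thesis using False assms by (simp add: W_seq_def)
qed

lemma sum_W_seq: "1 \<le> K \<Longrightarrow> (\<Sum>m=1..K. W_seq U m) = s_seq U K"
proof (induction K)
  case (Suc K)
  then show ?case by (cases "K = 0") (simp_all add: W_seq_def)
qed simp

lemma s_seq_card_ge_1:
  fixes a b :: "'n::finite \<Rightarrow> complex^'n"
  assumes oa: "orthonormal_basis_c a" and ob: "orthonormal_basis_c b"
  shows "1 \<le> s_seq (\<chi> i j. cinner (a i) (b j)) CARD('n)"
proof -
  define U where "U = (\<chi> i j. cinner (a i) (b j))"
  obtain j0 :: 'n where True by simp
  \<comment> \<open>every column of \<open>U\<close> is a unit vector\<close>
  have "(\<Sum>i\<in>UNIV. (cmod (\<Sum>j\<in>{j0}. U $ i $ j * axis j0 1 $ j))\<^sup>2)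
      = Re (\<Sum>i\<in>UNIV. cinner (a i) (b j0) * cnj (cinner (a i) (b j0)))"
    by (simp add: U_def axis_def Re_sum mult_cnj_self)
  also have "\<dots> = 1"
    using ob unfolding orthonormal_basis_c_parseval[OF oa] orthonormal_basis_c_def by simp
  moreover have "(\<Sum>j\<in>{j0}. (cmod (axis j0 (1::complex) $ j))\<^sup>2) = 1"
    by (simp add: axis_def)
  ultimately have "1 \<le> submatrix_norm U UNIV {j0}"
    using submatrix_norm_ge[where J="{j0}" and x="axis j0 1" and I=UNIV and U=U] by simp
  also have "\<dots> \<le> s_seq U CARD('n)"
    by (intro submatrix_norm_le_s_seq) auto
  finally show ?thesis unfolding U_def .
qed

section \<open>Majorization of the outcome probabilities\<close>

definition W_majorant :: "complex^'n::finite^'n \<Rightarrow> nat \<Rightarrow> real" where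
  "W_majorant U m = (if m = 0 then 1 else if m \<le> CARD('n) then W_seq U m else 0)"

lemma sum_W_majorant:
  fixes U :: "complex^'n::finite^'n" and f :: "real \<Rightarrow> real"
  assumes "f 0 = 0" "1 \<le> K"
  shows "(\<Sum>m<K. f (W_majorant U m)) = f 1 + (\<Sum>m=1..min (K - 1) CARD('n). f (W_seq U m))"
proof -
  have "{..<K} = insert 0 {1..K - 1}"
    using assms(2) by auto
  then have "(\<Sum>m<K. f (W_majorant U m)) = f 1 + (\<Sum>m=1..K - 1. f (W_majorant U m))"
    by (simp add: W_majorant_def)
  also have "(\<Sum>m=1..K - 1. f (W_majorant U m)) = (\<Sum>m=1..min (K - 1) CARD('n). f (W_seq U m))"
    by (rule sum.mono_neutral_cong_right) (auto simp: W_majorant_def assms(1))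
  finally show ?thesis .
qed

lemma partial_sum_W_majorant:
  fixes U :: "complex^'n::finite^'n"
  assumes "2 \<le> K"
  shows "(\<Sum>m<K. W_majorant U m) = 1 + s_seq U (min (K - 1) CARD('n))"
  using sum_W_majorant[of id K U] sum_W_seq[of "min (K - 1) CARD('n)" U] assms
  by (simp add: Suc_le_eq)

lemma partial_sum_W_majorant_ge_1:
  fixes U :: "complex^'n::finite^'n"
  assumes "1 \<le> K"
  shows "1 \<le> (\<Sum>m<K. W_majorant U m)"
proof -
  have "0 \<le> (\<Sum>m=1..min (K - 1) CARD('n). W_seq U m)"
    by (rule sum_nonneg) (simp add: W_seq_nonneg)
  then show ?thesis
    using sum_W_majorant[of id K U] assms by simp
qed

lemma sum_outcomes_le_W_majorant:
  fixes U :: "complex^'n::finite^'n" and p q :: "'n \<Rightarrow> real"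
  assumes p: "\<And>i. 0 \<le> p i" "(\<Sum>i\<in>UNIV. p i) = 1"
    and q: "\<And>j. 0 \<le> q j" "(\<Sum>j\<in>UNIV. q j) = 1"
    and pair: "\<And>I J. J \<noteq> {} \<Longrightarrow> (\<Sum>i\<in>I. p i) + (\<Sum>j\<in>J. q j) \<le> 1 + submatrix_norm U I J"
    and top: "1 \<le> s_seq U CARD('n)"
  shows "(\<Sum>i\<in>I. p i) + (\<Sum>j\<in>J. q j) \<le> (\<Sum>m<card I + card J. W_majorant U m)"
proof -
  have p_le: "(\<Sum>i\<in>I. p i) \<le> 1" and q_le: "(\<Sum>j\<in>J. q j) \<le> 1"
    using sum_mono2[of UNIV I p] sum_mono2[of UNIV J q] p q by auto
  show ?thesis
  proof (cases "I = {} \<or> J = {}")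
    case True
    then have le_1: "(\<Sum>i\<in>I. p i) + (\<Sum>j\<in>J. q j) \<le> 1"
      using p_le q_le by auto
    show ?thesis
    proof (cases "I = {} \<and> J = {}")
      case False
      then have "1 \<le> card I + card J"
        by (auto simp: Suc_le_eq card_gt_0_iff)
      then show ?thesis
        using le_1 partial_sum_W_majorant_ge_1 order_trans by blast
    qed simp
  next
    case False
    then have "0 < card I" "0 < card J"
      by (simp_all add: card_gt_0_iff)
    then have K: "2 \<le> card I + card J"
      by linarith
    have "(\<Sum>i\<in>I. p i) + (\<Sum>j\<in>J. q j) \<le> 1 + s_seq U (min (card I + card J - 1) CARD('n))"
    proof (cases "card I + card J - 1 \<le> CARD('n)")
      case True
      have "submatrix_norm U I J \<le> s_seq U (card I + card J - 1)"
        using False K by (intro submatrix_norm_le_s_seq) auto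
      then show ?thesis
        using True pair[of J I] False by simp
    next
      case False
      then show ?thesis
        using p_le q_le top by simp
    qed
    then show ?thesis
      using partial_sum_W_majorant[OF K, of U] by simp
  qed
qed

lemma sum_case_sum_le_W_majorant:
  fixes U :: "complex^'n::finite^'n" and p q :: "'n \<Rightarrow> real"
  assumes "\<And>I J. (\<Sum>i\<in>I. p i) + (\<Sum>j\<in>J. q j) \<le> (\<Sum>m<card I + card J. W_majorant U m)"
  shows "(\<Sum>t\<in>S. case_sum p q t) \<le> (\<Sum>m<card S. W_majorant U m)"
proof -
  have S: "S = Inl -` S <+> Inr -` S"
  proof (rule set_eqI)
    show "t \<in> S \<longleftrightarrow> t \<in> Inl -` S <+> Inr -` S" for t
      by (cases t) auto
  qed
  show ?thesis
    using assms[of "Inl -` S" "Inr -` S"]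
    by (subst (1 2) S) (simp add: sum.Plus comp_def card_Plus)
qed

lemma sum_powr_outcomes_le:
  fixes U :: "complex^'n::finite^'n" and p q :: "'n \<Rightarrow> real"
  assumes p: "\<And>i. 0 \<le> p i" "(\<Sum>i\<in>UNIV. p i) = 1"
    and q: "\<And>j. 0 \<le> q j" "(\<Sum>j\<in>UNIV. q j) = 1"
    and pair: "\<And>I J. J \<noteq> {} \<Longrightarrow> (\<Sum>i\<in>I. p i) + (\<Sum>j\<in>J. q j) \<le> 1 + submatrix_norm U I J"
    and top: "1 \<le> s_seq U CARD('n)"
    and \<alpha>: "1 < \<alpha>"
  shows "(\<Sum>i\<in>UNIV. p i powr \<alpha>) + (\<Sum>j\<in>UNIV. q j powr \<alpha>)
    \<le> 1 + (\<Sum>k=1..CARD('n). W_seq U k powr \<alpha>)"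
proof -
  have card: "CARD('n + 'n) = CARD('n) + CARD('n)" "0 < CARD('n)"
    by (simp_all add: card_UNIV_sum)
  have "(\<Sum>i\<in>UNIV. p i powr \<alpha>) + (\<Sum>j\<in>UNIV. q j powr \<alpha>) = (\<Sum>t\<in>UNIV. case_sum p q t powr \<alpha>)"
    by (simp add: UNIV_Plus_UNIV[symmetric] sum.Plus comp_def del: UNIV_Plus_UNIV)
  also have "\<dots> \<le> (\<Sum>m<CARD('n + 'n). W_majorant U m powr \<alpha>)"
  proof (rule sum_powr_le_if_weakly_majorized_finite[OF \<alpha>])
    show "0 \<le> case_sum p q t" for t
      using p q by (cases t) auto
    show "0 \<le> W_majorant U m" for m
      using W_seq_nonneg[of m U] by (simp add: W_majorant_def)
  qed (intro sum_case_sum_le_W_majorant sum_outcomes_le_W_majorant[OF p q pair top])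
  also have "\<dots> = 1 + (\<Sum>k=1..CARD('n). W_seq U k powr \<alpha>)"
    using sum_W_majorant[of "\<lambda>t. t powr \<alpha>" "CARD('n + 'n)" U] card by simp
  finally show ?thesis .
qed

lemma ln_add_ln_le_twice_ln_half:
  fixes P Q R :: real
  assumes "0 < P" "0 < Q" "P + Q \<le> R"
  shows "ln P + ln Q \<le> 2 * ln (R / 2)"
proof -
  have "P * Q \<le> ((P + Q) / 2)\<^sup>2"
    using sum_squares_ge_zero[of "P - Q" 0] by (simp add: power2_eq_square field_simps)
  also have "\<dots> \<le> (R / 2)\<^sup>2"
    using assms by (intro power_mono) auto
  finally have "ln (P * Q) \<le> ln ((R / 2)\<^sup>2)"
    using assms by simp
  then show ?thesis
    using assms by (simp add: ln_mult ln_realpow)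
qed

lemma sum_powr_pos:
  fixes p :: "'n::finite \<Rightarrow> real"
  assumes "\<And>i. 0 \<le> p i" "(\<Sum>i\<in>UNIV. p i) = 1"
  shows "0 < (\<Sum>i\<in>UNIV. p i powr a)"
proof -
  obtain i where "p i \<noteq> 0"
    using assms(2) by (metis sum.neutral zero_neq_one)
  then have "0 < p i powr a" by simp
  also have "\<dots> \<le> (\<Sum>i\<in>UNIV. p i powr a)"
    by (intro member_le_sum) auto
  finally show ?thesis .
qed

lemma renyi_entropy_add_ge:
  fixes p q :: "'n::finite \<Rightarrow> real"
  assumes \<alpha>: "1 < \<alpha>"
    and p: "\<And>i. 0 \<le> p i" "(\<Sum>i\<in>UNIV. p i) = 1"
    and q: "\<And>j. 0 \<le> q j" "(\<Sum>j\<in>UNIV. q j) = 1"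
    and R: "(\<Sum>i\<in>UNIV. p i powr \<alpha>) + (\<Sum>j\<in>UNIV. q j powr \<alpha>) \<le> R"
  shows "2 / (1 - \<alpha>) * ln (R / 2) \<le> renyi_entropy \<alpha> p + renyi_entropy \<alpha> q"
proof -
  have "ln (\<Sum>i\<in>UNIV. p i powr \<alpha>) + ln (\<Sum>j\<in>UNIV. q j powr \<alpha>) \<le> 2 * ln (R / 2)"
    using sum_powr_pos[OF p] sum_powr_pos[OF q] R by (rule ln_add_ln_le_twice_ln_half)
  moreover have "1 / (1 - \<alpha>) \<le> 0"
    using \<alpha> by simp
  ultimately have "1 / (1 - \<alpha>) * (2 * ln (R / 2))
      \<le> 1 / (1 - \<alpha>) * (ln (\<Sum>i\<in>UNIV. p i powr \<alpha>) + ln (\<Sum>j\<in>UNIV. q j powr \<alpha>))"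
    by (rule mult_left_mono_neg)
  then show ?thesis
    unfolding renyi_entropy_def by (simp add: algebra_simps)
qed

lemma sum_outcomes_le_one_plus_submatrix_norm:
  fixes a b :: "'n::finite \<Rightarrow> complex^'n"
  assumes "orthonormal_basis_c a" "orthonormal_basis_c b" "density_matrix \<rho>" "J \<noteq> {}"
  shows "(\<Sum>i\<in>I. Re (cinner (a i) (\<rho> *v a i))) + (\<Sum>j\<in>J. Re (cinner (b j) (\<rho> *v b j)))
    \<le> 1 + submatrix_norm (\<chi> i j. cinner (a i) (b j)) I J"
  using sum_outcomes_two_bases_le[OF assms(1,2) submatrix_norm_nonneg[OF assms(4)] assms(3)]
    sum_sq_submatrix_mult_le[OF assms(4), of "\<chi> i j. cinner (a i) (b j)"]
  by simp

theorem mainTheorem3: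
  fixes a b :: "'n::finite \<Rightarrow> complex ^ 'n"
    and \<rho> :: "complex ^ 'n ^ 'n"
    and \<alpha> :: real
  assumes "orthonormal_basis_c a"
    and "orthonormal_basis_c b"
    and "density_matrix \<rho>"
    and "\<alpha> > 1"
  shows "renyi_entropy \<alpha> (\<lambda>i. Re (cinner (a i) (\<rho> *v a i)))
         + renyi_entropy \<alpha> (\<lambda>j. Re (cinner (b j) (\<rho> *v b j)))
         \<ge> 2 / (1 - \<alpha>) * ln ((1 + (\<Sum>k=1..CARD('n).
               W_seq (\<chi> i j. cinner (a i) (b j)) k powr \<alpha>)) / 2)"
proof -
  note oa = assms(1) and ob = assms(2) and \<rho> = assms(3)
  have p: "\<And>i. 0 \<le> Re (cinner (a i) (\<rho> *v a i))" "(\<Sum>i\<in>UNIV. Re (cinner (a i) (\<rho> *v a i))) = 1"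
    using density_matrix_outcome_nonneg[OF \<rho>] density_matrix_sum_outcomes[OF oa \<rho>] by auto
  have q: "\<And>j. 0 \<le> Re (cinner (b j) (\<rho> *v b j))" "(\<Sum>j\<in>UNIV. Re (cinner (b j) (\<rho> *v b j))) = 1"
    using density_matrix_outcome_nonneg[OF \<rho>] density_matrix_sum_outcomes[OF ob \<rho>] by auto
  show ?thesis
    using sum_outcomes_le_one_plus_submatrix_norm[OF oa ob \<rho>]
    by (intro renyi_entropy_add_ge[OF assms(4) p q] sum_powr_outcomes_le[OF p q _
          s_seq_card_ge_1[OF oa ob] assms(4)])
qed

end
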